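(* Let $(n_1, n_2, 2, n_4, \dots, n_k)$ be an integer partition (with nonincreasing parts) in which $n_2 \geqslant 3$, and suppose it corresponds to the eigenvalue $\lambda$. Then the partition $(n_1, n_2, 3, n_4, \dots, n_k)$ also corresponds to the eigenvalue $\lambda$.
   Context: An integer partition $(n_1,\dots,n_k)$ of $n$ (with $n_1\geqslant n_2\geqslant\dots\geqslant n_k\geqslant 1$ and $\sum_j n_j=n$) is said to correspond to the eigenvalue $\lambda$ if $\lambda=\sum_{j=1}^k \frac{n_j(n_j-2j+1)}{2}$; this number is the eigenvalue of the Transposition graph $T_n=\mathrm{Cay}(\mathrm{Sym}_n,T)$ ($T$ the set of all transpositions) associated with the irreducible character of $\mathrm{Sym}_n$ indexed by the partition. *)

theory Defs
  imports Complex_Main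
begin

definition is_int_partition :: "nat \<Rightarrow> nat list \<Rightarrow> bool" where
  "is_int_partition n ps \<longleftrightarrow> sorted_wrt (\<ge>) ps \<and> (\<forall>x\<in>set ps. 1 \<le> x) \<and> sum_list ps = n"

definition partition_eigenvalue :: "nat list \<Rightarrow> real" where
  "partition_eigenvalue ps =
     (\<Sum>i<length ps. real (ps ! i) * (real (ps ! i) - 2 * real (i + 1) + 1) / 2)"

definition corresponds_to_eigenvalue :: "nat list \<Rightarrow> real \<Rightarrow> bool" where
  "corresponds_to_eigenvalue ps lam \<longleftrightarrow> lam = partition_eigenvalue ps"

end

theory Submission
  imports Defs
begin

text \<open>The summand of a part c in position j is c (c - (2j - 1)) / 2, which is invariant under the
  reflection c \<mapsto> 2j - 1 - c. In position j = 3 this reflection exchanges the parts 2 and 3, and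
  raising a part 2 to 3 keeps the list nonincreasing as long as the parts before it are at least 3.\<close>

lemma is_int_partition_increase_part:
  assumes "is_int_partition n (xs @ c # ys)" and "c \<le> c'" and "\<forall>x\<in>set xs. c' \<le> x"
  shows "is_int_partition (n + (c' - c)) (xs @ c' # ys)"
  using assms unfolding is_int_partition_def
  by (auto simp: sorted_wrt_append intro: order_trans)

lemma partition_eigenvalue_reflect_part:
  assumes "i < length ps" and "ps ! i \<le> 2 * i + 1"
  shows "partition_eigenvalue (ps[i := 2 * i + 1 - ps ! i]) = partition_eigenvalue ps"
proof -
  have "real c' * (real c' - 2 * real (i + 1) + 1) = real c * (real c - 2 * real (i + 1) + 1)"
    if "c' = 2 * i + 1 - c" and "c \<le> 2 * i + 1" for c c'
    using that by (simp add: of_nat_diff algebra_simps)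
  with assms show ?thesis
    unfolding partition_eigenvalue_def by (intro sum.cong) (auto simp: nth_list_update)
qed

theorem lemma3:
  fixes n n1 n2 :: nat and rest :: "nat list" and lam :: real
  assumes "is_int_partition n (n1 # n2 # 2 # rest)"
    and "n2 \<ge> 3"
    and "corresponds_to_eigenvalue (n1 # n2 # 2 # rest) lam"
  shows "is_int_partition (n + 1) (n1 # n2 # 3 # rest)
       \<and> corresponds_to_eigenvalue (n1 # n2 # 3 # rest) lam"
proof
  have "n1 \<ge> n2"
    using assms(1) by (simp add: is_int_partition_def)
  then show "is_int_partition (n + 1) (n1 # n2 # 3 # rest)"
    using is_int_partition_increase_part[of n "[n1, n2]" 2 rest 3] assms(1,2) by simp
  have "partition_eigenvalue (n1 # n2 # 3 # rest) = partition_eigenvalue (n1 # n2 # 2 # rest)"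
    using partition_eigenvalue_reflect_part[of 2 "n1 # n2 # 2 # rest"] by simp
  then show "corresponds_to_eigenvalue (n1 # n2 # 3 # rest) lam"
    using assms(3) by (simp add: corresponds_to_eigenvalue_def)
qed

end
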